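(* Let $n\ge 1$ and let $T\in\mathbb{C}^n\otimes\mathbb{C}^n\otimes\mathbb{C}^n$ have slice rank strictly less than $n$. Then $T$ lies in the nullcone of the action of $G=\mathrm{SL}_n\times\mathrm{SL}_n\times\mathrm{SL}_n$; that is, every homogeneous $G$-invariant polynomial of positive degree on $\mathbb{C}^n\otimes\mathbb{C}^n\otimes\mathbb{C}^n$ vanishes at $T$. *)

theory Defs
  imports "HOL-Analysis.Analysis"
begin

text \<open>Tensors in C^n (x) C^n (x) C^n, with n = CARD('n), as functions of three indices.\<close>
type_synonym 'n tensor3 = "'n \<Rightarrow> 'n \<Rightarrow> 'n \<Rightarrow> complex"

datatype slice_dir = Slice1 | Slice2 | Slice3

fun slice_tensor :: "slice_dir \<Rightarrow> ('n \<Rightarrow> complex) \<Rightarrow> ('n \<Rightarrow> 'n \<Rightarrow> complex) \<Rightarrow> 'n tensor3" where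
  "slice_tensor Slice1 u M = (\<lambda>i j k. u i * M j k)"
| "slice_tensor Slice2 u M = (\<lambda>i j k. u j * M i k)"
| "slice_tensor Slice3 u M = (\<lambda>i j k. u k * M i j)"

definition has_slice_decomp :: "'n tensor3 \<Rightarrow> nat \<Rightarrow> bool" where
  "has_slice_decomp T r \<longleftrightarrow>
     (\<exists>dir u M. T = (\<lambda>i j k. \<Sum>s<r. slice_tensor (dir s) (u s) (M s) i j k))"

definition slice_rank :: "'n tensor3 \<Rightarrow> nat" where
  "slice_rank T = (LEAST r. has_slice_decomp T r)"

definition tensor_act ::
  "complex^'n^'n \<Rightarrow> complex^'n^'n \<Rightarrow> complex^'n^'n \<Rightarrow> ('n::finite) tensor3 \<Rightarrow> 'n tensor3" where
  "tensor_act A B C T = (\<lambda>i j k. \<Sum>a\<in>UNIV. \<Sum>b\<in>UNIV. \<Sum>c\<in>UNIV.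
       A$i$a * B$j$b * C$k$c * T a b c)"

text \<open>Homogeneous polynomial functions of degree d in the n^3 coordinates T(i,j,k):
  linear combinations of degree-d monomials (indexed by lists of d coordinate positions).\<close>
definition homogeneous_poly_fun :: "nat \<Rightarrow> (('n::finite) tensor3 \<Rightarrow> complex) \<Rightarrow> bool" where
  "homogeneous_poly_fun d P \<longleftrightarrow>
     (\<exists>c :: ('n \<times> 'n \<times> 'n) list \<Rightarrow> complex.
        \<forall>T. P T = (\<Sum>xs\<in>{xs. length xs = d}.
                      c xs * (\<Prod>p\<leftarrow>xs. T (fst p) (fst (snd p)) (snd (snd p)))))"

definition SL3_invariant :: "(('n::finite) tensor3 \<Rightarrow> complex) \<Rightarrow> bool" where
  "SL3_invariant P \<longleftrightarrow>
     (\<forall>A B C :: complex^'n^'n. det A = 1 \<and> det B = 1 \<and> det C = 1 \<longrightarrow>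
        (\<forall>T. P (tensor_act A B C T) = P T))"

definition in_nullcone :: "('n::finite) tensor3 \<Rightarrow> bool" where
  "in_nullcone T \<longleftrightarrow>
     (\<forall>d P. d > 0 \<and> homogeneous_poly_fun d P \<and> SL3_invariant P \<longrightarrow> P T = 0)"

end

theory Submission
  imports Defs
begin

text \<open>Write T as a sum of r < n slices, and let m_d bound the dimension of the span W_d of the
  vectors of the slices in direction d, so that m_1 + m_2 + m_3 \<le> r < n. In a basis adapted to W_d,
  the diagonal matrix acting as x^(n - m_d) on W_d and as x^(-m_d) on the complementary coordinates
  has determinant 1. Under these three families a slice in direction d gains the factor x^(n - m_d)
  on its vector and at worst x^(-m_d' - m_d'') on its matrix, so it tends to 0 as x \<rightarrow> 0. Hence 0
  lies in the closure of the orbit of T, and an invariant homogeneous polynomial of positive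
  degree, being constant on the orbit and continuous, vanishes at T.\<close>

lemma tensor_act_sum:
  "tensor_act A B C (\<lambda>i j k. \<Sum>s\<in>R. T s i j k) i j k = (\<Sum>s\<in>R. tensor_act A B C (T s) i j k)"
  unfolding tensor_act_def sum_distrib_left
  by (subst sum.swap, rule sum.cong, simp, subst sum.swap, rule sum.cong, simp, rule sum.swap)

lemma tensor_act_Slice1:
  "tensor_act A B C (slice_tensor Slice1 u M) i j k =
     (A *v vec_lambda u) $ i * (\<Sum>b\<in>UNIV. \<Sum>c\<in>UNIV. B $ j $ b * C $ k $ c * M b c)"
  unfolding tensor_act_def matrix_vector_mult_def vec_lambda_beta sum_distrib_right
  by (simp only: sum_distrib_left) (simp add: mult_ac)

lemma tensor_act_Slice2:
  "tensor_act A B C (slice_tensor Slice2 u M) i j k = tensor_act B A C (slice_tensor Slice1 u M) j i k"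
  unfolding tensor_act_def by (subst sum.swap) (simp add: mult_ac)

lemma tensor_act_Slice3:
  "tensor_act A B C (slice_tensor Slice3 u M) i j k =
     tensor_act C B A (slice_tensor Slice1 u (\<lambda>a b. M b a)) k j i"
proof -
  have "tensor_act A B C (slice_tensor Slice3 u M) i j k =
      (\<Sum>b\<in>UNIV. \<Sum>a\<in>UNIV. \<Sum>c\<in>UNIV. A $ i $ a * B $ j $ b * C $ k $ c * (u c * M a b))"
    unfolding tensor_act_def slice_tensor.simps by (rule sum.swap)
  also have "\<dots> = (\<Sum>b\<in>UNIV. \<Sum>c\<in>UNIV. \<Sum>a\<in>UNIV. A $ i $ a * B $ j $ b * C $ k $ c * (u c * M a b))"
    by (intro sum.cong refl sum.swap)
  also have "\<dots> = tensor_act C B A (slice_tensor Slice1 u (\<lambda>a b. M b a)) k j i"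
    unfolding tensor_act_def by (subst sum.swap) (simp add: mult_ac)
  finally show ?thesis .
qed

lemma has_slice_decomp_CARD: "has_slice_decomp (T :: ('n::finite) tensor3) CARD('n)"
proof -
  obtain h :: "nat \<Rightarrow> 'n" where h: "bij_betw h {..<CARD('n)} UNIV"
    using ex_bij_betw_nat_finite[of "UNIV :: 'n set"] by (auto simp: atLeast0LessThan)
  have "T i j k = (\<Sum>s<CARD('n). slice_tensor Slice1 (\<lambda>a. if a = h s then 1 else 0) (T (h s)) i j k)"
    for i j k
  proof -
    have "(\<Sum>s<CARD('n). slice_tensor Slice1 (\<lambda>a. if a = h s then 1 else 0) (T (h s)) i j k) =
        (\<Sum>s<CARD('n). (\<lambda>a. if a = i then T a j k else 0) (h s))"
      by (intro sum.cong) auto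
    also have "\<dots> = T i j k"
      using sum.reindex_bij_betw[OF h, of "\<lambda>a. if a = i then T a j k else 0"] by simp
    finally show ?thesis ..
  qed
  then show ?thesis
    unfolding has_slice_decomp_def by fast
qed

lemma has_slice_decomp_slice_rank: "has_slice_decomp (T :: ('n::finite) tensor3) (slice_rank T)"
  unfolding slice_rank_def by (rule LeastI[of "has_slice_decomp T", OF has_slice_decomp_CARD])

lemma card_slice_dir_classes:
  "card {s. s < r \<and> dir s = Slice1} + card {s. s < r \<and> dir s = Slice2} +
     card {s. s < r \<and> dir s = Slice3} = r"
proof -
  have "{..<r} = {s. s < r \<and> dir s = Slice1} \<union> {s. s < r \<and> dir s = Slice2} \<union>
      {s. s < r \<and> dir s = Slice3}"
    by (auto intro: slice_dir.exhaust)
  moreover have "card ({s. s < r \<and> dir s = Slice1} \<union> {s. s < r \<and> dir s = Slice2} \<union>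
      {s. s < r \<and> dir s = Slice3}) = card {s. s < r \<and> dir s = Slice1} +
      card {s. s < r \<and> dir s = Slice2} + card {s. s < r \<and> dir s = Slice3}"
    by (subst card_Un_disjoint, auto)+
  ultimately show ?thesis
    by (metis card_lessThan)
qed

lemma tendsto_prod_list:
  fixes f :: "'a \<Rightarrow> 'b \<Rightarrow> 'c::{real_normed_algebra,comm_ring_1}"
  assumes "\<And>p. p \<in> set xs \<Longrightarrow> ((\<lambda>x. f x p) \<longlongrightarrow> l p) F"
  shows "((\<lambda>x. prod_list (map (f x) xs)) \<longlongrightarrow> prod_list (map l xs)) F"
  using assms by (induction xs) (auto intro!: tendsto_mult)

lemma homogeneous_poly_fun_tendsto_zero:
  fixes X :: "'a \<Rightarrow> ('n::finite) tensor3"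
  assumes "homogeneous_poly_fun d P" "0 < d"
    and "\<And>i j k. ((\<lambda>x. X x i j k) \<longlongrightarrow> 0) F"
  shows "((\<lambda>x. P (X x)) \<longlongrightarrow> 0) F"
proof -
  obtain c where P: "\<And>T. P T = (\<Sum>xs\<in>{xs. length xs = d}.
      c xs * (\<Prod>p\<leftarrow>xs. T (fst p) (fst (snd p)) (snd (snd p))))"
    using assms(1) unfolding homogeneous_poly_fun_def by blast
  have "((\<lambda>x. P (X x)) \<longlongrightarrow> (\<Sum>xs\<in>{xs. length xs = d}. c xs * (\<Prod>p\<leftarrow>xs. 0))) F"
    unfolding P by (intro tendsto_intros tendsto_prod_list assms(3))
  moreover have "(\<Prod>p\<leftarrow>xs. 0) = (0::complex)" if "length xs = d" for xs :: "('n \<times> 'n \<times> 'n) list"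
    using that assms(2) by (cases xs) auto
  ultimately show ?thesis by simp
qed

lemma in_nullcone_if_tendsto_zero:
  fixes T :: "('n::finite) tensor3" and A B C :: "complex \<Rightarrow> complex^'n^'n"
  assumes "\<And>x. x \<noteq> 0 \<Longrightarrow> det (A x) = 1 \<and> det (B x) = 1 \<and> det (C x) = 1"
    and "\<And>i j k. ((\<lambda>x. tensor_act (A x) (B x) (C x) T i j k) \<longlongrightarrow> 0) (at 0)"
  shows "in_nullcone T"
  unfolding in_nullcone_def
proof (intro allI impI, elim conjE)
  fix d and P :: "'n tensor3 \<Rightarrow> complex"
  assume "0 < d" "homogeneous_poly_fun d P" "SL3_invariant P"
  have "((\<lambda>x. P (tensor_act (A x) (B x) (C x) T)) \<longlongrightarrow> 0) (at 0)"
    by (rule homogeneous_poly_fun_tendsto_zero) fact+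
  moreover have "\<forall>\<^sub>F x in at 0. P (tensor_act (A x) (B x) (C x) T) = P T"
    using assms(1) \<open>SL3_invariant P\<close> unfolding SL3_invariant_def eventually_at_filter by simp
  ultimately have "((\<lambda>x. P T) \<longlongrightarrow> 0) (at (0::complex))"
    by (rule Lim_transform_eventually)
  then show "P T = 0" by (simp add: tendsto_const_iff)
qed

definition diag_mat :: "('n::finite \<Rightarrow> 'a::zero) \<Rightarrow> 'a^'n^'n"
  where "diag_mat d = (\<chi> a b. if a = b then d a else 0)"

lemma det_diag_mat: "det (diag_mat d) = (\<Prod>a\<in>UNIV. d a)"
  unfolding diag_mat_def by (subst det_diagonal) auto

lemma diag_mat_mult_vec: "diag_mat d *v v = (\<chi> a. d a * v $ a)"
  by (simp add: diag_mat_def matrix_vector_mult_def vec_eq_iff if_distrib[of "\<lambda>t. t * _"] cong: if_cong)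

lemma matrix_diag_mat_matrix_nth:
  "(G ** diag_mat d ** F) $ i $ j = (\<Sum>a\<in>UNIV. G $ i $ a * d a * F $ a $ j)"
  by (simp add: diag_mat_def matrix_matrix_mult_def sum_distrib_right if_distrib cong: if_cong)

lemma invertible_matrix_to_coordinate_subspace:
  fixes V :: "('a::field^'n::finite) set"
  assumes "finite V"
  obtains F :: "'a^'n^'n" and S :: "'n set"
  where "invertible F" "card S \<le> card V" "\<And>v i. v \<in> V \<Longrightarrow> i \<notin> S \<Longrightarrow> (F *v v) $ i = 0"
proof -
  obtain B1 where B1: "B1 \<subseteq> V" "vec.independent B1" "V \<subseteq> vec.span B1"
    by (rule vec.maximal_independent_subset)
  define B where "B = vec.extend_basis B1"
  have B: "B1 \<subseteq> B" "vec.independent B" "vec.span B = UNIV"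
    using B1(2) unfolding B_def by (auto simp: vec.extend_basis_superset vec.independent_extend_basis)
  obtain g :: "'a^'n \<Rightarrow> 'a^'n" where g: "Vector_Spaces.linear (*s) (*s) g" "bij g" "bij_betw g B cart_basis"
    using vec.basis_change_exists'[OF B(2) independent_cart_basis B(3) span_cart_basis] by auto
  have g_matrix: "(*v) (matrix g) = g"
    using matrix_works[OF g(1)] by auto
  define S where "S = {i. axis i 1 \<in> g ` B1}"
  have "card S \<le> card (g ` B1)"
    using B1(1) assms by (intro card_inj_on_le[of "\<lambda>i. axis i 1"])
      (auto simp: S_def inj_on_def axis_eq_axis intro: finite_subset)
  also have "\<dots> \<le> card V"
    using B1(1) assms by (meson card_image_le card_mono finite_subset order_trans)
  finally have "card S \<le> card V" .
  moreover have "invertible (matrix g)"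
    using g(2) by (simp add: invertible_eq_bij g_matrix)
  moreover have "(matrix g *v v) $ i = 0" if "v \<in> V" "i \<notin> S" for v i
  proof -
    define Z where "Z = {x :: 'a^'n. \<forall>i. i \<notin> S \<longrightarrow> x $ i = 0}"
    have "g ` B1 \<subseteq> Z"
    proof
      fix y assume y: "y \<in> g ` B1"
      then have "y \<in> cart_basis"
        using g(3) B(1) bij_betw_imp_surj_on by blast
      then obtain j where "y = axis j 1"
        unfolding cart_basis_def by auto
      with y show "y \<in> Z"
        unfolding Z_def S_def by (auto simp: axis_def)
    qed
    moreover have "vec.subspace Z"
      unfolding Z_def vec.subspace_def by auto
    ultimately have "vec.span (g ` B1) \<subseteq> Z"
      by (rule vec.span_minimal)
    moreover have "g v \<in> vec.span (g ` B1)"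
      using that(1) B1(3) vec.linear_span_image[OF g(1)] by blast
    ultimately show ?thesis
      using that(2) unfolding Z_def g_matrix by auto
  qed
  ultimately show ?thesis
    using that[of "matrix g" S] by blast
qed

definition sl_scaling_family :: "(complex^'n::finite) set \<Rightarrow> nat \<Rightarrow> (complex \<Rightarrow> complex^'n^'n) \<Rightarrow> bool"
  where "sl_scaling_family V m A \<longleftrightarrow>
    (\<forall>x. x \<noteq> 0 \<longrightarrow> det (A x) = 1 \<and> (\<forall>v\<in>V. A x *v v = x ^ (CARD('n) - m) *s v)) \<and>
    (\<exists>L. \<forall>i j. ((\<lambda>x. x ^ m * A x $ i $ j) \<longlongrightarrow> L $ i $ j) (at 0))"

lemma sl_scaling_family_exists:
  fixes V :: "(complex^'n::finite) set"
  assumes "finite V"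
  obtains m A where "m \<le> card V" "sl_scaling_family V m A"
proof -
  obtain F :: "complex^'n^'n" and S where F: "invertible F" "card S \<le> card V"
    and supp: "\<And>v i. v \<in> V \<Longrightarrow> i \<notin> S \<Longrightarrow> (F *v v) $ i = 0"
    using invertible_matrix_to_coordinate_subspace[OF assms] by blast
  obtain G where G: "G ** F = mat 1"
    using F(1) unfolding invertible_def by blast
  let ?n = "CARD('n)"
  define m where "m = card S"
  have "m \<le> ?n"
    unfolding m_def by (simp add: card_mono)
  define A where "A x = G ** diag_mat (\<lambda>a. if a \<in> S then x ^ (?n - m) else inverse x ^ m) ** F" for x
  have det_A: "det (A x) = 1" if "x \<noteq> 0" for x
  proof -
    have "det (diag_mat (\<lambda>a. if a \<in> S then x ^ (?n - m) else inverse x ^ m)) =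
        (x ^ (?n - m)) ^ m * (inverse x ^ m) ^ (?n - m)"
      using card_Diff_subset[of S UNIV]
      by (simp add: det_diag_mat prod.If_cases Int_absorb1 m_def Compl_eq_Diff_UNIV)
    also have "\<dots> = 1"
      using that by (simp add: mult.commute flip: power_mult power_mult_distrib)
    finally show ?thesis
      using G by (simp add: A_def det_mul) (metis det_I det_mul)
  qed
  have scale_A: "A x *v v = x ^ (?n - m) *s v" if "v \<in> V" for x v
  proof -
    have "diag_mat (\<lambda>a. if a \<in> S then x ^ (?n - m) else inverse x ^ m) *v (F *v v)
        = x ^ (?n - m) *s (F *v v)"
      using supp[OF that] by (simp add: diag_mat_mult_vec vec_eq_iff)
    moreover have "G *v (F *v v) = v"
      using G by (simp add: matrix_vector_mul_assoc)
    ultimately show ?thesis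
      by (simp add: A_def matrix_vector_mul_assoc[symmetric] vec.scale)
  qed
  have lim_A: "((\<lambda>x. x ^ m * A x $ i $ j) \<longlongrightarrow>
      (G ** diag_mat (\<lambda>a. if a \<in> S then 0 else 1) ** F) $ i $ j) (at 0)" for i j
  proof -
    have "x ^ m * A x $ i $ j = (\<Sum>a\<in>UNIV. G $ i $ a * (if a \<in> S then x ^ ?n else 1) * F $ a $ j)"
      if "x \<noteq> 0" for x
    proof -
      have diag: "(if a \<in> S then x ^ ?n else 1) = x ^ m * (if a \<in> S then x ^ (?n - m) else inverse x ^ m)"
        for a
        using that \<open>m \<le> ?n\<close> by (simp flip: power_add power_mult_distrib)
      show ?thesis
        unfolding A_def matrix_diag_mat_matrix_nth sum_distrib_left diag by (simp add: mult_ac)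
    qed
    then have "\<forall>\<^sub>F x in at 0.
        (\<Sum>a\<in>UNIV. G $ i $ a * (if a \<in> S then x ^ ?n else 1) * F $ a $ j) = x ^ m * A x $ i $ j"
      unfolding eventually_at_filter by simp
    moreover have "((\<lambda>x. if a \<in> S then x ^ ?n else 1) \<longlongrightarrow> (if a \<in> S then 0 else 1)) (at (0::complex))"
      for a
      by (cases "a \<in> S") (auto intro!: tendsto_eq_intros)
    then have "((\<lambda>x. \<Sum>a\<in>UNIV. G $ i $ a * (if a \<in> S then x ^ ?n else 1) * F $ a $ j) \<longlongrightarrow>
        (G ** diag_mat (\<lambda>a. if a \<in> S then 0 else 1) ** F) $ i $ j) (at 0)"
      unfolding matrix_diag_mat_matrix_nth by (intro tendsto_intros)
    ultimately show ?thesis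
      by (rule Lim_transform_eventually[rotated])
  qed
  have "sl_scaling_family V m A"
    unfolding sl_scaling_family_def using det_A scale_A lim_A by blast
  then show ?thesis
    using that F(2) unfolding m_def by blast
qed

lemma sl_scaling_families_exist:
  fixes V :: "'i \<Rightarrow> (complex^'n::finite) set"
  assumes "\<And>d. finite (V d)"
  obtains m F where "\<And>d. m d \<le> card (V d)" "\<And>d. sl_scaling_family (V d) (m d) (F d)"
proof -
  have "\<forall>d. \<exists>m A. m \<le> card (V d) \<and> sl_scaling_family (V d) m A"
    using sl_scaling_family_exists[OF assms] by blast
  then obtain m where "\<forall>d. \<exists>A. m d \<le> card (V d) \<and> sl_scaling_family (V d) (m d) A"
    using choice[of "\<lambda>d m. \<exists>A. m \<le> card (V d) \<and> sl_scaling_family (V d) m A"] by blast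
  then show ?thesis
    using that choice[of "\<lambda>d A. m d \<le> card (V d) \<and> sl_scaling_family (V d) (m d) A"] by blast
qed

lemma tendsto_tensor_act_Slice1_zero:
  fixes A B C :: "complex \<Rightarrow> complex^'n::finite^'n"
  assumes "sl_scaling_family U m1 A" "vec_lambda u \<in> U"
    and "sl_scaling_family V m2 B" "sl_scaling_family W m3 C"
    and m: "m1 + m2 + m3 < CARD('n)"
  shows "((\<lambda>x. tensor_act (A x) (B x) (C x) (slice_tensor Slice1 u M) i j k) \<longlongrightarrow> 0) (at 0)"
proof -
  have A: "A x *v vec_lambda u = x ^ (CARD('n) - m1) *s vec_lambda u" if "x \<noteq> 0" for x
    using assms(1,2) that unfolding sl_scaling_family_def by blast
  obtain LB LC where B: "\<And>b. ((\<lambda>x. x ^ m2 * B x $ j $ b) \<longlongrightarrow> LB $ j $ b) (at 0)"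
    and C: "\<And>c. ((\<lambda>x. x ^ m3 * C x $ k $ c) \<longlongrightarrow> LC $ k $ c) (at 0)"
    using assms(3,4) unfolding sl_scaling_family_def by blast
  define e where "e = CARD('n) - (m1 + m2 + m3)"
  define f where "f x = u i * (\<Sum>b\<in>UNIV. \<Sum>c\<in>UNIV. (x ^ m2 * B x $ j $ b) * (x ^ m3 * C x $ k $ c) * M b c)"
    for x
  have "tensor_act (A x) (B x) (C x) (slice_tensor Slice1 u M) i j k = x ^ e * f x" if "x \<noteq> 0" for x
  proof -
    have "CARD('n) - m1 = e + m2 + m3" using m unfolding e_def by simp
    then show ?thesis
      unfolding tensor_act_Slice1 A[OF that] f_def
      by (simp add: power_add sum_distrib_left mult_ac)
  qed
  then have "\<forall>\<^sub>F x in at 0. x ^ e * f x = tensor_act (A x) (B x) (C x) (slice_tensor Slice1 u M) i j k"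
    unfolding eventually_at_filter by simp
  moreover have "((\<lambda>x. x ^ e * f x) \<longlongrightarrow> 0) (at 0)"
  proof -
    have "((\<lambda>x. x ^ e * f x) \<longlongrightarrow> 0 ^ e * (u i * (\<Sum>b\<in>UNIV. \<Sum>c\<in>UNIV. LB $ j $ b * LC $ k $ c * M b c))) (at 0)"
      unfolding f_def by (intro tendsto_intros B C)
    moreover have "(0::complex) ^ e = 0"
      using m unfolding e_def by simp
    ultimately show ?thesis
      by simp
  qed
  ultimately show ?thesis
    by (rule Lim_transform_eventually[rotated])
qed

lemma tendsto_tensor_act_slice_tensor_zero:
  fixes F :: "slice_dir \<Rightarrow> complex \<Rightarrow> complex^'n::finite^'n"
  assumes F: "\<And>d. sl_scaling_family (V d) (m d) (F d)"
    and m: "m Slice1 + m Slice2 + m Slice3 < CARD('n)"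
    and u: "vec_lambda u \<in> V d"
  shows "((\<lambda>x. tensor_act (F Slice1 x) (F Slice2 x) (F Slice3 x) (slice_tensor d u M) i j k)
           \<longlongrightarrow> 0) (at 0)"
proof (cases d)
  case Slice1
  show ?thesis
    unfolding Slice1
    by (rule tendsto_tensor_act_Slice1_zero[OF F _ F F]) (use m u Slice1 in auto)
next
  case Slice2
  show ?thesis
    unfolding Slice2 tensor_act_Slice2
    by (rule tendsto_tensor_act_Slice1_zero[OF F _ F F]) (use m u Slice2 in auto)
next
  case Slice3
  show ?thesis
    unfolding Slice3 tensor_act_Slice3
    by (rule tendsto_tensor_act_Slice1_zero[OF F _ F F]) (use m u Slice3 in auto)
qed

theorem lemma4:
  fixes T :: "('n::finite) tensor3"
  assumes "slice_rank T < CARD('n)"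
  shows "in_nullcone T"
proof -
  define r where "r = slice_rank T"
  obtain dir u M where T: "T = (\<lambda>i j k. \<Sum>s<r. slice_tensor (dir s) (u s) (M s) i j k)"
    using has_slice_decomp_slice_rank[of T] unfolding has_slice_decomp_def r_def by blast
  define V where "V d = (\<lambda>s. vec_lambda (u s)) ` {s. s < r \<and> dir s = d}" for d
  obtain m F where m: "\<And>d. m d \<le> card (V d)" and F: "\<And>d. sl_scaling_family (V d) (m d) (F d)"
    by (rule sl_scaling_families_exist[of V]) (auto simp: V_def)
  have m_le: "m d \<le> card {s. s < r \<and> dir s = d}" for d
    by (rule order_trans[OF m[of d]]) (simp add: V_def card_image_le)
  have m_sum: "m Slice1 + m Slice2 + m Slice3 < CARD('n)"
    using m_le[of Slice1] m_le[of Slice2] m_le[of Slice3] card_slice_dir_classes[of r dir] assms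
    unfolding r_def by linarith
  have "((\<lambda>x. tensor_act (F Slice1 x) (F Slice2 x) (F Slice3 x)
      (slice_tensor (dir s) (u s) (M s)) i j k) \<longlongrightarrow> 0) (at 0)" if "s < r" for s i j k
    by (rule tendsto_tensor_act_slice_tensor_zero[OF F m_sum]) (use that in \<open>simp add: V_def\<close>)
  then have "((\<lambda>x. tensor_act (F Slice1 x) (F Slice2 x) (F Slice3 x) T i j k) \<longlongrightarrow> 0) (at 0)"
    for i j k
    unfolding T tensor_act_sum by (intro tendsto_null_sum) simp
  moreover have "det (F d x) = 1" if "x \<noteq> 0" for d x
    using F[of d] that unfolding sl_scaling_family_def by blast
  ultimately show ?thesis
    by (intro in_nullcone_if_tendsto_zero) blast+
qed

end
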